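(* Let $n\ge5$ and $S=\{1,s\}\subset\mathbb Z_n$ with $s$ an integer, $1<s<n/2$. Let $\mathbb K$ be a field of characteristic $0$. (1) If $s=2$, then for every $m\ge1$, $\Omega_m(\vec C_n^S)$ has the basis of $2n$ elements $\{\alpha_a^{(m)},\beta_a^{(m)}\}_{a\in\mathbb Z_n}$, where \[\alpha_a^{(m)}=e_{a,(a+1),\ldots,(a+m)},\qquad \beta_a^{(m)}=\sum_{j=1}^m(-1)^{m-j}\,e_{a,a+1,\ldots,a+j-1,a+j+1,a+j+2,\ldots,a+m+1}\] (indices mod $n$). (2) If $s\ne2$, then $\Omega_2(\vec C_n^S)$ has the basis of $n$ elements $\{\gamma_a\}_{a\in\mathbb Z_n}$ with $\gamma_a=e_{a,a+1,a+1+s}-e_{a,a+s,a+1+s}$, and $\Omega_m(\vec C_n^S)=0$ for all $m\ge3$.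
   Context: GLMY path complex over a field $\mathbb K$ of characteristic $0$: elementary paths $e_{v_0\cdots v_n}$, boundary $\partial e_{v_0\cdots v_n}=\sum_{j}(-1)^j e_{v_0\cdots\widehat{v_j}\cdots v_n}$, paths with two equal consecutive vertices set to $0$; $A_n(G)$ = span of paths along arrows of $G$; $\Omega_0=A_0$, $\Omega_1=A_1$, $\Omega_n=\{u\in A_n:\partial u\in A_{n-1}\}$. The circulant digraph $\vec{C}_n^S$ has vertex set $\mathbb Z_n$ and an arrow $a\to a+s$ for each $a\in\mathbb Z_n$, $s\in S$. *)

theory Defs
  imports Complex_Main "HOL-Library.Function_Algebras"
begin

text \<open>Vertices of the circulant digraph are the naturals 0..n-1 (representing Z_n).
  Elementary paths are vertex lists; a chain is a function from vertex lists to the field.\<close>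

definition arrow :: "nat \<Rightarrow> nat set \<Rightarrow> nat \<Rightarrow> nat \<Rightarrow> bool" where
  "arrow n S a b \<longleftrightarrow> a < n \<and> (\<exists>t\<in>S. b = (a + t) mod n)"

definition allowed :: "nat \<Rightarrow> nat set \<Rightarrow> nat list \<Rightarrow> bool" where
  "allowed n S p \<longleftrightarrow> set p \<subseteq> {0..<n} \<and> (\<forall>i. Suc i < length p \<longrightarrow> arrow n S (p!i) (p!Suc i))"

definition regular :: "nat list \<Rightarrow> bool" where
  "regular p \<longleftrightarrow> (\<forall>i. Suc i < length p \<longrightarrow> p!i \<noteq> p!Suc i)"

text \<open>elementary path; non-regular paths are identified with 0\<close>
definition epath :: "nat list \<Rightarrow> nat list \<Rightarrow> 'k::field" where
  "epath p = (\<lambda>q. if regular p \<and> q = p then 1 else 0)"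

definition del_at :: "nat \<Rightarrow> nat list \<Rightarrow> nat list" where
  "del_at j p = take j p @ drop (Suc j) p"

definition paths_len :: "nat \<Rightarrow> nat \<Rightarrow> nat list set" where
  "paths_len n l = {p. length p = l \<and> set p \<subseteq> {0..<n}}"

text \<open>boundary of a chain supported on vertex lists with entries < n\<close>
definition boundary :: "nat \<Rightarrow> (nat list \<Rightarrow> 'k::field) \<Rightarrow> nat list \<Rightarrow> 'k" where
  "boundary n u q = (if regular q then
     (\<Sum>p\<in>paths_len n (Suc (length q)). \<Sum>j<length p.
        if del_at j p = q then (-1)^j * u p else 0) else 0)"

text \<open>A_m: span of allowed elementary m-paths (lists of m+1 vertices)\<close>
definition A_space :: "nat \<Rightarrow> nat set \<Rightarrow> nat \<Rightarrow> (nat list \<Rightarrow> 'k::field) set" where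
  "A_space n S m = {u. \<forall>p. u p \<noteq> 0 \<longrightarrow> length p = Suc m \<and> allowed n S p \<and> regular p}"

definition Omega :: "nat \<Rightarrow> nat set \<Rightarrow> nat \<Rightarrow> (nat list \<Rightarrow> 'k::field) set" where
  "Omega n S m = {u \<in> A_space n S m. m = 0 \<or> boundary n u \<in> A_space n S (m - 1)}"

definition cscale :: "'k::field \<Rightarrow> (nat list \<Rightarrow> 'k) \<Rightarrow> nat list \<Rightarrow> 'k" where
  "cscale c u = (\<lambda>p. c * u p)"

definition is_basis :: "(nat list \<Rightarrow> 'k::field) set \<Rightarrow> (nat list \<Rightarrow> 'k) set \<Rightarrow> bool" where
  "is_basis B V \<longleftrightarrow> \<not> module.dependent cscale B \<and> module.span cscale B = V"

definition alpha :: "nat \<Rightarrow> nat \<Rightarrow> nat \<Rightarrow> nat list \<Rightarrow> 'k::field" where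
  "alpha n m a = epath (map (\<lambda>i. (a + i) mod n) [0..<Suc m])"

definition beta :: "nat \<Rightarrow> nat \<Rightarrow> nat \<Rightarrow> nat list \<Rightarrow> 'k::field" where
  "beta n m a = (\<lambda>q. \<Sum>j=1..m. (-1)^(m-j) *
      epath (map (\<lambda>i. (a + i) mod n) ([0..<j] @ [Suc j..<m+2])) q)"

definition gamma :: "nat \<Rightarrow> nat \<Rightarrow> nat \<Rightarrow> nat list \<Rightarrow> 'k::field" where
  "gamma n s a = (\<lambda>q. epath [a, (a+1) mod n, (a+1+s) mod n] q
                     - epath [a, (a+s) mod n, (a+1+s) mod n] q)"

end

theory Submission
  imports Defs "HOL-Number_Theory.Cong"
begin

text \<open>An allowed path of \<open>C\<^sub>n\<^sup>S\<close> with \<open>S = {1, s}\<close> is a walk \<open>a, a + w\<^sub>0, a + w\<^sub>0 + w\<^sub>1, \<dots>\<close>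
  with steps \<open>w\<^sub>i \<in> S\<close>, and because \<open>2 s < n\<close> the start and the steps are determined by the path.
  If \<open>w\<^sub>i + w\<^sub>i\<^sub>+\<^sub>1 \<notin> S\<close>, deleting the vertex between these two steps gives a non-allowed face,
  and the only allowed paths over it are the walk itself and the walk with \<open>w\<^sub>i\<close>, \<open>w\<^sub>i\<^sub>+\<^sub>1\<close>
  exchanged. Hence every \<open>u \<in> \<Omega>\<^sub>m\<close> changes sign under such a swap and vanishes on walks with
  \<open>w\<^sub>i = w\<^sub>i\<^sub>+\<^sub>1\<close>. For \<open>s \<noteq> 2\<close> no two steps add up to an element of \<open>S\<close>; this kills every
  walk of length at least 3 and leaves only the antisymmetric combinations \<open>\<gamma>\<^sub>a\<close> for \<open>m = 2\<close>.
  For \<open>s = 2\<close> only pairs containing a step 2 are constrained: walks with two steps 2 vanish and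
  a single step 2 moves to the front up to sign, so \<open>u\<close> is determined by its values on the
  walks \<open>(1, \<dots>, 1)\<close> and \<open>(2, 1, \<dots>, 1)\<close>, which \<open>\<alpha>\<^sub>a\<close> and \<open>\<beta>\<^sub>a\<close> separate.\<close>

section \<open>Bases of spaces of chains\<close>

lemma sum_fun_apply: "(sum f A) x = (\<Sum>a\<in>A. f a x)"
  by (induct A rule: infinite_finite_induct) auto

lemma module_cscale: "module (cscale :: 'k::field \<Rightarrow> (nat list \<Rightarrow> 'k) \<Rightarrow> _)"
  by unfold_locales (auto simp: cscale_def fun_eq_iff algebra_simps)

lemma independent_of_dual_points:
  fixes f :: "'i \<Rightarrow> nat list \<Rightarrow> 'k::field" and pt :: "'i \<Rightarrow> nat list"
  assumes nz: "\<And>i. i \<in> I \<Longrightarrow> f i (pt i) \<noteq> 0"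
    and z: "\<And>i j. i \<in> I \<Longrightarrow> j \<in> I \<Longrightarrow> j \<noteq> i \<Longrightarrow> f j (pt i) = 0"
  shows "\<not> module.dependent cscale (f ` I)"
proof -
  interpret M: module "cscale :: 'k \<Rightarrow> (nat list \<Rightarrow> 'k) \<Rightarrow> _" by (rule module_cscale)
  show ?thesis
    unfolding M.independent_explicit_module
  proof (intro allI impI)
    fix t c v assume t: "finite t" "t \<subseteq> f ` I" "(\<Sum>v\<in>t. cscale (c v) v) = 0" "v \<in> t"
    then obtain i where i: "i \<in> I" "v = f i" by auto
    have others: "(\<Sum>w\<in>t - {v}. c w * w (pt i)) = 0"
    proof (rule sum.neutral, rule ballI)
      fix w assume "w \<in> t - {v}"
      with t(2) i obtain j where "j \<in> I" "w = f j" "j \<noteq> i" by auto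
      thus "c w * w (pt i) = 0" using z[OF i(1)] by simp
    qed
    have "0 = (\<Sum>v\<in>t. cscale (c v) v) (pt i)" using t(3) by simp
    also have "\<dots> = c v * v (pt i) + (\<Sum>w\<in>t - {v}. c w * w (pt i))"
      by (simp add: sum_fun_apply cscale_def sum.remove[OF t(1) t(4)])
    finally show "c v = 0" using others nz[OF i(1)] i(2) by simp
  qed
qed

lemma is_basis_of_dual_points:
  fixes f :: "'i \<Rightarrow> nat list \<Rightarrow> 'k::field" and pt :: "'i \<Rightarrow> nat list"
  assumes fin: "finite I"
    and nz: "\<And>i. i \<in> I \<Longrightarrow> f i (pt i) \<noteq> 0"
    and z: "\<And>i j. i \<in> I \<Longrightarrow> j \<in> I \<Longrightarrow> j \<noteq> i \<Longrightarrow> f j (pt i) = 0"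
    and inV: "\<And>i. i \<in> I \<Longrightarrow> f i \<in> V"
    and sub: "module.subspace cscale V"
    and vanish: "\<And>v. v \<in> V \<Longrightarrow> (\<And>i. i \<in> I \<Longrightarrow> v (pt i) = 0) \<Longrightarrow> v = 0"
  shows "is_basis (f ` I) V \<and> card (f ` I) = card I"
proof -
  interpret M: module "cscale :: 'k \<Rightarrow> (nat list \<Rightarrow> 'k) \<Rightarrow> _" by (rule module_cscale)
  have "inj_on f I"
  proof (rule inj_onI)
    fix i j assume "i \<in> I" "j \<in> I" "f i = f j"
    thus "i = j" using nz z by metis
  qed
  moreover have "M.span (f ` I) \<subseteq> V" by (rule M.span_minimal[OF _ sub]) (use inV in auto)
  moreover have "V \<subseteq> M.span (f ` I)"
  proof
    fix u assume u: "u \<in> V"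
    \<comment> \<open>the expansion of \<open>u\<close> is read off its values at the dual points\<close>
    define r where "r = (\<Sum>i\<in>I. cscale (u (pt i) / f i (pt i)) (f i))"
    have rV: "r \<in> V" unfolding r_def
      by (rule M.subspace_sum[OF sub]) (intro M.subspace_scale[OF sub] inV)
    have "u - r = 0"
    proof (rule vanish)
      show "u - r \<in> V" by (rule M.subspace_diff[OF sub u rV])
      fix k assume k: "k \<in> I"
      have "r (pt k) = (\<Sum>i\<in>I. u (pt i) / f i (pt i) * f i (pt k))"
        by (simp add: r_def sum_fun_apply cscale_def)
      also have "\<dots> = u (pt k) / f k (pt k) * f k (pt k)"
        by (rule sum.remove[OF fin k, THEN trans]) (simp add: z[OF k] sum.neutral)
      also have "\<dots> = u (pt k)" using nz[OF k] by simp
      finally show "(u - r) (pt k) = 0" by simp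
    qed
    moreover have "r \<in> M.span (f ` I)" unfolding r_def
      by (intro M.span_sum M.span_scale M.span_base) auto
    ultimately show "u \<in> M.span (f ` I)" by simp
  qed
  ultimately show ?thesis
    using independent_of_dual_points[of I f pt] nz z by (auto simp: is_basis_def card_image)
qed

section \<open>Faces of paths\<close>

definition insert_at :: "nat \<Rightarrow> nat \<Rightarrow> nat list \<Rightarrow> nat list" where
  "insert_at j x q = take j q @ x # drop j q"

lemma length_del_at: "j < length p \<Longrightarrow> length (del_at j p) = length p - 1"
  by (simp add: del_at_def)

lemma nth_del_at: "j < length p \<Longrightarrow> i < length p - 1 \<Longrightarrow>
   del_at j p ! i = (if i < j then p ! i else p ! Suc i)"
  by (auto simp: del_at_def nth_append min_def)

lemma set_del_at: "set (del_at j p) \<subseteq> set p"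
  unfolding del_at_def by (auto dest: in_set_takeD in_set_dropD)

lemma length_insert_at: "length (insert_at j x q) = Suc (length q)"
  by (simp add: insert_at_def)

lemma nth_insert_at_same: "j \<le> length q \<Longrightarrow> insert_at j x q ! j = x"
  by (simp add: insert_at_def nth_append min_def)

lemma set_insert_at: "set (insert_at j x q) \<subseteq> insert x (set q)"
  unfolding insert_at_def by (auto dest: in_set_takeD in_set_dropD)

lemma del_at_insert_at: "j \<le> length q \<Longrightarrow> del_at j (insert_at j x q) = q"
  by (simp add: del_at_def insert_at_def min_def)

lemma insert_at_del_at: "j < length p \<Longrightarrow> insert_at j (p ! j) (del_at j p) = p"
  by (simp add: del_at_def insert_at_def min_def id_take_nth_drop[symmetric])

lemma insert_at_del_at_eq_update: "j < length p \<Longrightarrow> insert_at j x (del_at j p) = p[j := x]"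
  by (simp add: del_at_def insert_at_def min_def upd_conv_take_nth_drop)

lemma insert_at_eq_iff:
  assumes "j < length p" "length q = length p - 1"
  shows "insert_at j x q = p \<longleftrightarrow> x = p ! j \<and> del_at j p = q"
  using assms nth_insert_at_same[of j q x] del_at_insert_at[of j q x] insert_at_del_at[of j p]
  by auto

lemma finite_paths_len: "finite (paths_len n l)"
proof -
  have "paths_len n l = {xs. set xs \<subseteq> {0..<n} \<and> length xs = l}" by (auto simp: paths_len_def)
  thus ?thesis using finite_lists_length_eq[of "{0..<n}" l] by simp
qed

lemma paths_over_face:
  assumes "length q = m" "set q \<subseteq> {0..<n}" "j < Suc m"
  shows "{p \<in> paths_len n (Suc m). del_at j p = q} = (\<lambda>x. insert_at j x q) ` {..<n}"
proof (intro set_eqI iffI)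
  fix p assume "p \<in> {p \<in> paths_len n (Suc m). del_at j p = q}"
  hence p: "length p = Suc m" "set p \<subseteq> {0..<n}" "del_at j p = q" by (auto simp: paths_len_def)
  hence "p ! j < n" using assms(3) nth_mem[of j p] by fastforce
  moreover have "p = insert_at j (p ! j) q" using insert_at_del_at[of j p] assms(3) p by auto
  ultimately show "p \<in> (\<lambda>x. insert_at j x q) ` {..<n}" by blast
next
  fix p assume "p \<in> (\<lambda>x. insert_at j x q) ` {..<n}"
  then obtain x where "x < n" "p = insert_at j x q" by auto
  thus "p \<in> {p \<in> paths_len n (Suc m). del_at j p = q}" using set_insert_at[of j x q] assms
    by (auto simp: paths_len_def length_insert_at del_at_insert_at)
qed

section \<open>Allowed and \<open>\<partial>\<close>-invariant chains\<close>

lemma boundary_linear: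
  fixes u v :: "nat list \<Rightarrow> 'k::field"
  shows "boundary n (\<lambda>p. c * u p + d * v p) q = c * boundary n u q + d * boundary n v q"
proof -
  have eq: "(if del_at j p = q then (-1)^j * (c * u p + d * v p) else 0) =
     c * (if del_at j p = q then (-1)^j * u p else 0) + d * (if del_at j p = q then (-1)^j * v p else 0)"
    for j p by (simp add: algebra_simps)
  show ?thesis unfolding boundary_def
    by (simp only: eq sum.distrib sum_distrib_left[symmetric]) simp
qed

lemma A_space_sum:
  fixes f :: "'j \<Rightarrow> nat list \<Rightarrow> 'k::field"
  assumes "\<And>j. j \<in> J \<Longrightarrow> f j \<in> A_space n S m"
  shows "(\<lambda>q. \<Sum>j\<in>J. c j * f j q) \<in> A_space n S m"
  unfolding A_space_def
proof (intro CollectI allI impI)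
  fix q assume "(\<Sum>j\<in>J. c j * f j q) \<noteq> 0"
  then obtain j where "j \<in> J" "c j * f j q \<noteq> 0" by (meson sum.neutral)
  thus "length q = Suc m \<and> allowed n S q \<and> regular q" using assms unfolding A_space_def by auto
qed

lemma A_space_lincomb:
  fixes u v :: "nat list \<Rightarrow> 'k::field"
  assumes "u \<in> A_space n S m" "v \<in> A_space n S m"
  shows "(\<lambda>p. c * u p + d * v p) \<in> A_space n S m"
  unfolding A_space_def
proof (intro CollectI allI impI)
  fix p assume "c * u p + d * v p \<noteq> 0"
  hence "u p \<noteq> 0 \<or> v p \<noteq> 0" by auto
  thus "length p = Suc m \<and> allowed n S p \<and> regular p" using assms unfolding A_space_def by blast
qed

lemma epath_in_A_space:
  "allowed n S p \<Longrightarrow> regular p \<Longrightarrow> length p = Suc m \<Longrightarrow> (epath p :: _ \<Rightarrow> 'k::field) \<in> A_space n S m"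
  by (auto simp: A_space_def epath_def)

lemma Omega_lincomb:
  fixes u v :: "nat list \<Rightarrow> 'k::field"
  assumes "u \<in> Omega n S m" "v \<in> Omega n S m"
  shows "(\<lambda>p. c * u p + d * v p) \<in> Omega n S m"
proof -
  have "boundary n (\<lambda>p. c * u p + d * v p) = (\<lambda>q. c * boundary n u q + d * boundary n v q)"
    by (simp add: fun_eq_iff boundary_linear)
  thus ?thesis using assms A_space_lincomb unfolding Omega_def by fastforce
qed

lemma Omega_subspace: "module.subspace cscale (Omega n S m :: (nat list \<Rightarrow> 'k::field) set)"
proof -
  interpret M: module "cscale :: 'k \<Rightarrow> (nat list \<Rightarrow> 'k) \<Rightarrow> _" by (rule module_cscale)
  show ?thesis
  proof (rule M.subspaceI)
    show "0 \<in> (Omega n S m :: (nat list \<Rightarrow> 'k) set)"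
      using boundary_linear[of n 0 "0 :: nat list \<Rightarrow> 'k" 0 0]
      by (simp add: Omega_def A_space_def zero_fun_def)
  next
    fix u v :: "nat list \<Rightarrow> 'k" assume "u \<in> Omega n S m" "v \<in> Omega n S m"
    from Omega_lincomb[OF this, of 1 1] show "u + v \<in> Omega n S m" by (simp add: plus_fun_def)
  next
    fix c :: 'k and u :: "nat list \<Rightarrow> 'k" assume "u \<in> Omega n S m"
    from Omega_lincomb[OF this this, of c 0] show "cscale c u \<in> Omega n S m" by (simp add: cscale_def)
  qed
qed

lemma del_at_allowed_at_non_allowed_face:
  assumes al: "allowed n S p" and lp: "length p = Suc m" and k: "k < Suc m" and d: "del_at k p = q"
    and j: "0 < j" "j < m" and na: "\<not> arrow n S (q!(j-1)) (q!j)"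
  shows "k = j"
proof (rule ccontr)
  assume "k \<noteq> j"
  then consider "k < j" | "j < k" by linarith
  thus False
  proof cases
    case 1
    have "q!(j-1) = p!j" "q!j = p!Suc j"
      using d j k 1 lp nth_del_at[of k p "j-1"] nth_del_at[of k p j] by auto
    moreover have "arrow n S (p!j) (p!Suc j)" using al lp j unfolding allowed_def by auto
    ultimately show False using na by simp
  next
    case 2
    obtain i where i: "j = Suc i" using j by (cases j) auto
    have "q!i = p!i" "q!j = p!j"
      using d j k 2 i lp nth_del_at[of k p i] nth_del_at[of k p j] by auto
    moreover have "arrow n S (p!i) (p!Suc i)" using al lp j i unfolding allowed_def by auto
    ultimately show False using na i by simp
  qed
qed

lemma boundary_at_non_allowed_face:
  fixes u :: "nat list \<Rightarrow> 'k::field"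
  assumes u: "u \<in> A_space n S m" and q: "length q = m" "regular q" "set q \<subseteq> {0..<n}"
    and j: "0 < j" "j < m" and na: "\<not> arrow n S (q!(j-1)) (q!j)"
  shows "boundary n u q = (-1)^j * (\<Sum>x<n. u (insert_at j x q))"
proof -
  let ?PL = "paths_len n (Suc m)"
  have only_j: "(\<Sum>k<length p. if del_at k p = q then (-1)^k * u p else 0)
      = (if del_at j p = q then (-1)^j * u p else 0)" if p: "p \<in> ?PL" for p
  proof (cases "u p = 0")
    case True thus ?thesis by (simp add: sum.neutral)
  next
    case False
    hence al: "allowed n S p" and lp: "length p = Suc m"
      using u p by (auto simp: A_space_def paths_len_def)
    have "(\<Sum>k<length p. if del_at k p = q then (-1)^k * u p else 0)
        = (\<Sum>k<Suc m. if k = j then (if del_at j p = q then (-1)^j * u p else 0) else 0)"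
    proof (rule sum.cong)
      fix k assume "k \<in> {..<Suc m}"
      thus "(if del_at k p = q then (-1)^k * u p else 0)
          = (if k = j then (if del_at j p = q then (-1)^j * u p else 0) else 0)"
        using del_at_allowed_at_non_allowed_face[OF al lp _ _ j na, of k] by (cases "del_at k p = q") auto
    qed (simp add: lp)
    thus ?thesis using j by simp
  qed
  have inj: "inj_on (\<lambda>x. insert_at j x q) {..<n}"
    using nth_insert_at_same[of j q] j q(1) by (intro inj_onI) (metis less_imp_le)
  have "boundary n u q = (\<Sum>p\<in>?PL. if del_at j p = q then (-1)^j * u p else 0)"
    unfolding boundary_def using q by (simp add: only_j cong: sum.cong)
  also have "\<dots> = (\<Sum>p\<in>{p \<in> ?PL. del_at j p = q}. (-1)^j * u p)"
    by (rule sum.inter_filter[symmetric, OF finite_paths_len])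
  also have "\<dots> = (\<Sum>x<n. (-1)^j * u (insert_at j x q))"
    using paths_over_face[OF q(1) q(3), of j] j(2)
    by (simp add: sum.reindex[OF inj])
  also have "\<dots> = (-1)^j * (\<Sum>x<n. u (insert_at j x q))" by (simp add: sum_distrib_left)
  finally show ?thesis .
qed

lemma support_boundary_A_space:
  fixes u :: "nat list \<Rightarrow> 'k::field"
  assumes u: "u \<in> A_space n S m" and nz: "boundary n u q \<noteq> 0"
  shows "length q = m" "regular q" "set q \<subseteq> {0..<n}"
proof -
  show "regular q" using nz unfolding boundary_def by (auto split: if_splits)
  show "length q = m"
  proof (rule ccontr)
    assume "length q \<noteq> m"
    hence "\<forall>p\<in>paths_len n (Suc (length q)). u p = 0" using u
      by (auto simp: paths_len_def A_space_def)
    hence "boundary n u q = 0" unfolding boundary_def by (simp add: sum.neutral)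
    thus False using nz by simp
  qed
  show "set q \<subseteq> {0..<n}"
  proof (rule ccontr)
    assume "\<not> set q \<subseteq> {0..<n}"
    hence "\<forall>p\<in>paths_len n (Suc (length q)). \<forall>k. del_at k p \<noteq> q"
      using set_del_at by (fastforce simp: paths_len_def)
    hence "boundary n u q = 0" unfolding boundary_def by (simp add: sum.neutral)
    thus False using nz by simp
  qed
qed

lemma Omega_iff_face_sums:
  fixes u :: "nat list \<Rightarrow> 'k::field"
  assumes m: "1 \<le> m" and u: "u \<in> A_space n S m"
  shows "u \<in> Omega n S m \<longleftrightarrow> (\<forall>q j. length q = m \<longrightarrow> regular q \<longrightarrow> set q \<subseteq> {0..<n} \<longrightarrow>
     0 < j \<longrightarrow> j < m \<longrightarrow> \<not> arrow n S (q!(j-1)) (q!j) \<longrightarrow> (\<Sum>x<n. u (insert_at j x q)) = 0)"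
    (is "_ \<longleftrightarrow> ?faces")
proof
  assume o: "u \<in> Omega n S m"
  show ?faces
  proof (intro allI impI)
    fix q j assume q: "length q = m" "regular q" "set q \<subseteq> {0..<n}" "0 < j" "j < m"
      "\<not> arrow n S (q!(j-1)) (q!j)"
    obtain i where i: "j = Suc i" using q by (cases j) auto
    have "\<not> allowed n S q"
      using q i unfolding allowed_def by (metis diff_Suc_1)
    hence "boundary n u q = 0" using o m unfolding Omega_def A_space_def by auto
    thus "(\<Sum>x<n. u (insert_at j x q)) = 0" using boundary_at_non_allowed_face[OF u q] by simp
  qed
next
  assume faces: ?faces
  have "boundary n u \<in> A_space n S (m - 1)"
    unfolding A_space_def
  proof (intro CollectI allI impI)
    fix q assume nz: "boundary n u q \<noteq> 0"
    note q = support_boundary_A_space[OF u nz]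
    have "allowed n S q"
    proof (rule ccontr)
      assume "\<not> allowed n S q"
      then obtain i where i: "Suc i < length q" "\<not> arrow n S (q!i) (q!Suc i)"
        using q(3) unfolding allowed_def by auto
      have "boundary n u q = (-1)^(Suc i) * (\<Sum>x<n. u (insert_at (Suc i) x q))"
        by (rule boundary_at_non_allowed_face[OF u q]) (use i q in auto)
      also have "\<dots> = 0" using faces q i by fastforce
      finally show False using nz by simp
    qed
    thus "length q = Suc (m - 1) \<and> allowed n S q \<and> regular q" using q m by simp
  qed
  thus "u \<in> Omega n S m" using u by (simp add: Omega_def)
qed

lemma sum_epath_insert_at:
  assumes "regular p" "j < length p" "p!j < n" "length q = length p - 1"
  shows "(\<Sum>x<n. (epath p (insert_at j x q) :: 'k::field)) = (if del_at j p = q then 1 else 0)"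
proof -
  have "(\<Sum>x<n. (epath p (insert_at j x q) :: 'k))
      = (\<Sum>x<n. if x = p!j then (if del_at j p = q then 1 else 0) else 0)"
  proof (rule sum.cong)
    fix x show "(epath p (insert_at j x q) :: 'k) = (if x = p!j then (if del_at j p = q then 1 else 0) else 0)"
      using insert_at_eq_iff[OF assms(2,4), of x] assms(1) by (auto simp: epath_def)
  qed simp
  thus ?thesis using assms(3) by simp
qed

section \<open>Walks in the circulant digraph\<close>

definition walk :: "nat \<Rightarrow> nat \<Rightarrow> nat \<Rightarrow> (nat \<Rightarrow> nat) \<Rightarrow> nat list" where
  "walk n m a w = map (\<lambda>k. (a + (\<Sum>i<k. w i)) mod n) [0..<Suc m]"

definition swap_steps :: "nat \<Rightarrow> (nat \<Rightarrow> nat) \<Rightarrow> nat \<Rightarrow> nat" where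
  "swap_steps i w = w(i := w (Suc i), Suc i := w i)"

lemma length_walk [simp]: "length (walk n m a w) = Suc m"
  by (simp add: walk_def)

lemma nth_walk: "k \<le> m \<Longrightarrow> walk n m a w ! k = (a + (\<Sum>i<k. w i)) mod n"
  by (simp add: walk_def nth_map_upt del: upt_Suc)

lemma nth_Suc_walk: "k < m \<Longrightarrow> walk n m a w ! Suc k = (walk n m a w ! k + w k) mod n"
  by (simp add: nth_walk mod_add_left_eq add.assoc)

lemma set_walk: "0 < n \<Longrightarrow> set (walk n m a w) \<subseteq> {0..<n}"
  by (auto simp: walk_def)

lemma walk_cong: "(\<And>i. i < m \<Longrightarrow> w i = w' i) \<Longrightarrow> walk n m a w = walk n m a w'"
  unfolding walk_def by (intro map_cong refl arg_cong2[where f = "(mod)"] arg_cong2[where f = "(+)"]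
    sum.cong) auto

lemma mod_add_left_cancel_less:
  fixes y d t n :: nat
  assumes "(y + d) mod n = (y + t) mod n" "d < n" "t < n"
  shows "d = t"
proof -
  have "d mod n = t mod n" using assms(1) cong_add_lcancel_nat[of y d t n] unfolding cong_def by simp
  thus ?thesis using assms by simp
qed

lemma mod_add_neq_self:
  fixes x d n :: nat
  assumes "x < n" "0 < d" "d < n"
  shows "(x + d) mod n \<noteq> x"
  using mod_add_left_cancel_less[of x d n 0] assms by auto

lemma arrow_add_mod_iff:
  assumes "x < n" "d < n" "\<And>t. t \<in> S \<Longrightarrow> t < n"
  shows "arrow n S x ((x + d) mod n) \<longleftrightarrow> d \<in> S"
  using assms mod_add_left_cancel_less[of x d n] unfolding arrow_def by fastforce

lemma regular_walk:
  assumes "\<And>i. i < m \<Longrightarrow> 0 < w i \<and> w i < n"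
  shows "regular (walk n m a w)"
  unfolding regular_def
proof (intro allI impI)
  fix i assume "Suc i < length (walk n m a w)"
  hence i: "i < m" by simp
  moreover have "0 < n" using assms[OF i] by linarith
  ultimately have "walk n m a w ! i < n" by (simp add: nth_walk)
  thus "walk n m a w ! i \<noteq> walk n m a w ! Suc i"
    using nth_Suc_walk[OF i] mod_add_neq_self assms[OF i] by metis
qed

lemma allowed_walk_iff:
  assumes "0 < n" "\<And>t. t \<in> S \<Longrightarrow> t < n" "\<And>i. i < m \<Longrightarrow> w i < n"
  shows "allowed n S (walk n m a w) \<longleftrightarrow> (\<forall>i<m. w i \<in> S)"
proof -
  have "arrow n S (walk n m a w ! i) (walk n m a w ! Suc i) \<longleftrightarrow> w i \<in> S" if i: "i < m" for i
    unfolding nth_Suc_walk[OF i]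
    by (rule arrow_add_mod_iff) (use i assms in \<open>auto simp: nth_walk\<close>)
  thus ?thesis using set_walk[OF assms(1)] unfolding allowed_def by auto
qed

lemma walk_eq_iff:
  assumes "a < n" "a' < n" "\<And>i. i < m \<Longrightarrow> w i < n \<and> w' i < n"
  shows "walk n m a w = walk n m a' w' \<longleftrightarrow> a = a' \<and> (\<forall>i<m. w i = w' i)"
proof
  assume eq: "walk n m a w = walk n m a' w'"
  have "walk n m a w ! 0 = walk n m a' w' ! 0" using eq by simp
  hence "a = a'" using assms(1,2) by (simp add: nth_walk)
  moreover have "w i = w' i" if i: "i < m" for i
  proof -
    have "(walk n m a w ! i + w i) mod n = (walk n m a w ! i + w' i) mod n"
      using nth_Suc_walk[OF i, of n a w] nth_Suc_walk[OF i, of n a' w'] eq by simp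
    thus ?thesis using mod_add_left_cancel_less assms(3)[OF i] by blast
  qed
  ultimately show "a = a' \<and> (\<forall>i<m. w i = w' i)" by blast
qed (auto intro: walk_cong)

lemma epath_walk:
  assumes "a < n" "a' < n" "\<And>i. i < m \<Longrightarrow> 0 < w i \<and> w i < n \<and> w' i < n"
  shows "(epath (walk n m a w) (walk n m a' w') :: 'k::field)
    = (if a = a' \<and> (\<forall>i<m. w i = w' i) then 1 else 0)"
  using regular_walk[of m w n a] walk_eq_iff[of a n a' m w w'] assms by (auto simp: epath_def)

lemma allowed_path_is_walk:
  assumes S: "\<And>t. t \<in> S \<Longrightarrow> t < n" and al: "allowed n S p" and lp: "length p = Suc m"
  shows "\<exists>w. (\<forall>i<m. w i \<in> S) \<and> p = walk n m (p!0) w \<and> p!0 < n"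
proof -
  have "\<forall>i. \<exists>t. i < m \<longrightarrow> t \<in> S \<and> p!Suc i = (p!i + t) mod n"
    using al lp unfolding allowed_def arrow_def by auto
  from choice[OF this] obtain w where w: "\<And>i. i < m \<Longrightarrow> w i \<in> S \<and> p!Suc i = (p!i + w i) mod n"
    by blast
  have "p!0 \<in> set p" using lp by simp
  hence p0: "p!0 < n" using al unfolding allowed_def by auto
  have pk: "p!k = (p!0 + (\<Sum>i<k. w i)) mod n" if "k \<le> m" for k
    using that
  proof (induct k)
    case 0 thus ?case using p0 by simp
  next
    case (Suc k)
    hence "p!Suc k = ((p!0 + (\<Sum>i<k. w i)) mod n + w k) mod n" using w[of k] by simp
    thus ?case by (simp add: mod_add_left_eq add.assoc)
  qed
  have "p = walk n m (p!0) w"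
  proof (rule nth_equalityI)
    fix k assume "k < length p"
    hence "k \<le> m" using lp by simp
    thus "p!k = walk n m (p!0) w ! k" using pk[of k] by (simp only: nth_walk)
  qed (simp add: lp)
  thus ?thesis using w p0 by blast
qed

lemma nth_walk_swap_steps:
  assumes "Suc i \<le> m" "k \<le> m"
  shows "walk n m a (swap_steps i w) ! k
    = (if k = Suc i then (walk n m a w ! i + w (Suc i)) mod n else walk n m a w ! k)"
proof -
  have "(\<Sum>l<k. swap_steps i w l) = (if k = Suc i then (\<Sum>l<i. w l) + w (Suc i) else (\<Sum>l<k. w l))"
    by (induct k) (auto simp: swap_steps_def)
  thus ?thesis using assms by (simp add: nth_walk mod_add_left_eq add.assoc)
qed

lemma walk_swap_steps_eq_update:
  assumes "Suc i \<le> m"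
  shows "walk n m a (swap_steps i w) = (walk n m a w)[Suc i := (walk n m a w ! i + w (Suc i)) mod n]"
  by (rule nth_equalityI) (use assms in \<open>auto simp: nth_walk_swap_steps nth_list_update\<close>)

lemma del_at_update_same: "del_at j (p[j := x]) = del_at j p"
  by (simp add: del_at_def)

lemma del_at_walk_swap_steps:
  "Suc i \<le> m \<Longrightarrow> del_at (Suc i) (walk n m a (swap_steps i w)) = del_at (Suc i) (walk n m a w)"
  by (simp add: walk_swap_steps_eq_update del_at_update_same)

lemma face_of_walk:
  fixes a :: nat
  assumes i: "Suc i < m" and w: "\<And>k. k < m \<Longrightarrow> 0 < w k \<and> w k < n"
    and d: "w i + w (Suc i) < n"
  defines "q \<equiv> del_at (Suc i) (walk n m a w)"
  shows "length q = m" "set q \<subseteq> {0..<n}" "regular q"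
    and "q ! i = walk n m a w ! i"
    and "q ! Suc i = (walk n m a w ! i + (w i + w (Suc i))) mod n"
proof -
  let ?p = "walk n m a w"
  have n: "0 < n" using w i by fastforce
  have pi: "?p ! i < n" using n i by (simp add: nth_walk)
  have q_nth: "q ! k = (if k < Suc i then ?p ! k else ?p ! Suc k)" if "k < m" for k
    unfolding q_def using nth_del_at[of "Suc i" ?p k] that i by simp
  show lq: "length q = m" using i by (simp add: q_def length_del_at)
  show "set q \<subseteq> {0..<n}" using set_del_at[of "Suc i" ?p] set_walk[OF n, of m a w]
    by (auto simp: q_def)
  show qi: "q ! i = ?p ! i" using q_nth[of i] i by simp
  show qSi: "q ! Suc i = (?p ! i + (w i + w (Suc i))) mod n"
    using q_nth[of "Suc i"] i nth_Suc_walk[of "Suc i" m n a w] nth_Suc_walk[of i m n a w]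
    by (simp add: mod_add_left_eq add.assoc)
  have rp: "?p ! k \<noteq> ?p ! Suc k" if "k < m" for k
    using regular_walk[of m w n a] w that unfolding regular_def by simp
  show "regular q" unfolding regular_def
  proof (intro allI impI)
    fix k assume k: "Suc k < length q"
    consider "Suc k < Suc i" | "k = i" | "Suc i \<le> k" by linarith
    thus "q!k \<noteq> q!Suc k"
    proof cases
      case 1 thus ?thesis using q_nth[of k] q_nth[of "Suc k"] k lq rp[of k] by auto
    next
      case 2
      have "0 < w i + w (Suc i)" using w i by fastforce
      thus ?thesis using 2 qi qSi mod_add_neq_self[OF pi _ d] by simp
    next
      case 3 thus ?thesis using q_nth[of k] q_nth[of "Suc k"] k lq rp[of "Suc k"] by auto
    qed
  qed
qed

lemma arrow_face_of_walk_iff: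
  assumes i: "Suc i < m" and w: "\<And>k. k < m \<Longrightarrow> 0 < w k \<and> w k < n"
    and d: "w i + w (Suc i) < n" and S: "\<And>t. t \<in> S \<Longrightarrow> t < n"
  shows "arrow n S (del_at (Suc i) (walk n m a w) ! i) (del_at (Suc i) (walk n m a w) ! Suc i)
    \<longleftrightarrow> w i + w (Suc i) \<in> S"
proof -
  have "walk n m a w ! i < n" using w i by (fastforce simp: nth_walk)
  thus ?thesis using arrow_add_mod_iff[OF _ d S] face_of_walk(4,5)[OF i w d] by simp
qed

section \<open>The swap relation in \<open>\<Omega>\<close>\<close>

lemma allowed_update_walk:
  assumes s: "1 < s" "2 * s < n" and w: "\<forall>k<m. w k \<in> {1, s}" and i: "Suc i < m"
    and al: "allowed n {1, s} ((walk n m a w)[Suc i := x])"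
  shows "x = walk n m a w ! Suc i \<or> x = (walk n m a w ! i + w (Suc i)) mod n"
proof -
  let ?p = "walk n m a w"
  have "arrow n {1, s} (?p[Suc i := x] ! k) (?p[Suc i := x] ! Suc k)" if "k < m" for k
    using al that unfolding allowed_def by simp
  from this[of i] this[of "Suc i"] i
  have "arrow n {1, s} (?p ! i) x" "arrow n {1, s} x (?p ! Suc (Suc i))" by auto
  then obtain t1 t2 where t: "t1 \<in> {1, s}" "t2 \<in> {1, s}"
    and x: "x = (?p ! i + t1) mod n" and "?p ! Suc (Suc i) = (x + t2) mod n"
    unfolding arrow_def by blast
  hence "(?p ! i + (t1 + t2)) mod n = (?p ! i + (w i + w (Suc i))) mod n"
    using i nth_Suc_walk[of "Suc i" m n a w] nth_Suc_walk[of i m n a w]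
    by (simp add: mod_add_left_eq add.assoc)
  moreover have wi: "w i \<in> {1, s}" "w (Suc i) \<in> {1, s}" using w i by auto
  moreover have "t1 + t2 < n" "w i + w (Suc i) < n" using t wi s by auto
  ultimately have "t1 + t2 = w i + w (Suc i)" using mod_add_left_cancel_less by blast
  hence "t1 = w i \<or> t1 = w (Suc i)" using t wi s by auto
  thus ?thesis using x i nth_Suc_walk[of i m n a w] by auto
qed

lemma Omega_swap_relation:
  fixes u :: "nat list \<Rightarrow> 'k::field"
  assumes s: "1 < s" "2 * s < n" and u: "u \<in> Omega n {1, s} m" and a: "a < n"
    and w: "\<forall>k<m. w k \<in> {1, s}" and i: "Suc i < m" and nd: "w i + w (Suc i) \<notin> {1, s}"
  shows "u (walk n m a w) + (if w i = w (Suc i) then 0 else u (walk n m a (swap_steps i w))) = 0"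
proof -
  let ?p = "walk n m a w"
  define q where "q = del_at (Suc i) ?p"
  define y where "y = (?p ! i + w (Suc i)) mod n"
  have n: "0 < n" using s by simp
  have wn: "\<And>k. k < m \<Longrightarrow> 0 < w k \<and> w k < n" using w s by fastforce
  have "w i \<in> {1, s}" "w (Suc i) \<in> {1, s}" using w i by auto
  hence d: "w i + w (Suc i) < n" using s by auto
  have uA: "u \<in> A_space n {1, s} m" using u by (simp add: Omega_def)
  note face = face_of_walk[OF i wn d, where a = a, folded q_def]
  have "\<And>t. t \<in> {1, s} \<Longrightarrow> t < n" using s by auto
  hence "\<not> arrow n {1, s} (q ! (Suc i - 1)) (q ! Suc i)"
    using arrow_face_of_walk_iff[OF i wn d, of "{1, s}" a] nd unfolding q_def by simp
  hence "(\<Sum>x<n. u (insert_at (Suc i) x q)) = 0"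
    using iffD1[OF Omega_iff_face_sums[OF _ uA] u] face(1-3) i by simp
  moreover have "insert_at (Suc i) x q = ?p[Suc i := x]" for x
    unfolding q_def using insert_at_del_at_eq_update[of "Suc i" ?p x] i by simp
  moreover have "x \<in> {?p ! Suc i, y}" if "x < n" "u (?p[Suc i := x]) \<noteq> 0" for x
    using allowed_update_walk[OF s w i, of a x] that uA unfolding y_def A_space_def by blast
  hence "(\<Sum>x<n. u (?p[Suc i := x])) = (\<Sum>x\<in>{?p ! Suc i, y}. u (?p[Suc i := x]))"
    using n i by (intro sum.mono_neutral_right) (auto simp: y_def nth_walk)
  ultimately have sum0: "(\<Sum>x\<in>{?p ! Suc i, y}. u (?p[Suc i := x])) = 0" by simp
  have swap: "walk n m a (swap_steps i w) = ?p[Suc i := y]"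
    unfolding y_def using i by (simp add: walk_swap_steps_eq_update)
  show ?thesis
  proof (cases "w i = w (Suc i)")
    case True
    hence "y = ?p ! Suc i" using i by (simp add: y_def nth_Suc_walk)
    thus ?thesis using sum0 True by simp
  next
    case False
    hence "y \<noteq> ?p ! Suc i"
      using mod_add_left_cancel_less[of "?p ! i" "w (Suc i)" n "w i"] wn i
      by (auto simp: y_def nth_Suc_walk)
    thus ?thesis using sum0 False swap by simp
  qed
qed

corollary Omega_vanishes_at_equal_steps:
  fixes u :: "nat list \<Rightarrow> 'k::field"
  assumes "1 < s" "2 * s < n" "u \<in> Omega n {1, s} m" "a < n"
    and "\<forall>k<m. w k \<in> {1, s}" "Suc i < m" "w i + w (Suc i) \<notin> {1, s}" "w i = w (Suc i)"
  shows "u (walk n m a w) = 0"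
  using Omega_swap_relation[OF assms(1-7)] assms(8) by simp

corollary Omega_swap_steps_antisym:
  fixes u :: "nat list \<Rightarrow> 'k::field"
  assumes "1 < s" "2 * s < n" "u \<in> Omega n {1, s} m" "a < n"
    and "\<forall>k<m. w k \<in> {1, s}" "Suc i < m" "w i + w (Suc i) \<notin> {1, s}" "w i \<noteq> w (Suc i)"
  shows "u (walk n m a (swap_steps i w)) = - u (walk n m a w)"
  using Omega_swap_relation[OF assms(1-7)] assms(8) by (simp add: eq_neg_iff_add_eq_0 add.commute)

lemma Omega_support_walk:
  fixes u :: "nat list \<Rightarrow> 'k::field"
  assumes s: "1 < s" "2 * s < n" and u: "u \<in> Omega n {1, s} m" and nz: "u p \<noteq> 0"
  obtains a w where "a < n" "\<forall>i<m. w i \<in> {1, s}" "p = walk n m a w"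
proof -
  have "length p = Suc m" "allowed n {1, s} p" using u nz by (auto simp: Omega_def A_space_def)
  moreover have "\<And>t. t \<in> {1, s} \<Longrightarrow> t < n" using s by auto
  ultimately show ?thesis using allowed_path_is_walk[of "{1, s}" n p m] that by blast
qed

lemma swap_steps_mem:
  "\<forall>k<m. w k \<in> S \<Longrightarrow> Suc i < m \<Longrightarrow> \<forall>k<m. swap_steps i w k \<in> S"
  by (auto simp: swap_steps_def)

section \<open>The case \<open>s \<noteq> 2\<close>\<close>

lemma step_sum_notin:
  fixes s m i :: nat and w :: "nat \<Rightarrow> nat"
  assumes "1 < s" "s \<noteq> 2" "\<forall>k<m. w k \<in> {1, s}" "Suc i < m"
  shows "w i + w (Suc i) \<notin> {1, s}"
proof -
  have "w i \<in> {1, s}" "w (Suc i) \<in> {1, s}" using assms(3,4) by auto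
  thus ?thesis using assms(1,2) by auto
qed

lemma Omega_eq_zero_if_ge_3:
  fixes u :: "nat list \<Rightarrow> 'k::field"
  assumes s: "1 < s" "2 * s < n" "s \<noteq> 2" and m: "3 \<le> m" and u: "u \<in> Omega n {1, s} m"
  shows "u = (\<lambda>_. 0)"
proof
  fix p show "u p = 0"
  proof (rule ccontr)
    assume nz: "u p \<noteq> 0"
    then obtain a w where a: "a < n" and w: "\<forall>i<m. w i \<in> {1, s}" and p: "p = walk n m a w"
      using Omega_support_walk[OF s(1,2) u] by blast
    have i01: "Suc 0 < m" "Suc 1 < m" using m by auto
    have vanish: "u (walk n m a w') = 0"
      if "\<forall>k<m. w' k \<in> {1, s}" "Suc i < m" "w' i = w' (Suc i)" for w' i
      using Omega_vanishes_at_equal_steps[OF s(1,2) u a that(1,2) step_sum_notin[OF s(1,3) that(1,2)]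
          that(3)] .
    have "u (walk n m a w) = 0"
    proof (cases "w 0 = w 1 \<or> w 1 = w 2")
      case True
      thus ?thesis using vanish[OF w i01(1)] vanish[OF w i01(2)] by (auto simp: numeral_2_eq_2)
    next
      case False
      \<comment> \<open>the steps alternate, so swapping the first two produces two equal steps\<close>
      moreover have "w 0 \<in> {1, s}" "w 1 \<in> {1, s}" "w 2 \<in> {1, s}" using w m by auto
      ultimately have "w 0 \<noteq> w 1" "swap_steps 0 w 1 = swap_steps 0 w 2"
        by (auto simp: swap_steps_def numeral_2_eq_2)
      moreover have "u (walk n m a (swap_steps 0 w)) = 0"
        using vanish[OF swap_steps_mem[OF w i01(1)] i01(2)] calculation(2)
        by (simp add: numeral_2_eq_2)
      ultimately show ?thesis
        using Omega_swap_steps_antisym[OF s(1,2) u a w i01(1) step_sum_notin[OF s(1,3) w i01(1)]]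
        by simp
    qed
    thus False using nz p by simp
  qed
qed

lemma walk_2: "walk n 2 a w = [a mod n, (a + w 0) mod n, (a + (w 0 + w 1)) mod n]"
  by (simp add: walk_def numeral_2_eq_2 upt_rec)

lemma gamma_eq_walks:
  "a < n \<Longrightarrow> (gamma n s a :: nat list \<Rightarrow> 'k::field) =
     (\<lambda>q. epath (walk n 2 a (nth [1, s])) q - epath (walk n 2 a (nth [s, 1])) q)"
  by (simp add: gamma_def walk_2 add.assoc add.commute)

lemma
  assumes "1 < s" "2 * s < n" "w = nth [1, s] \<or> w = nth [s, 1]"
  shows regular_walk_gamma: "regular (walk n 2 a w)"
    and allowed_walk_gamma: "allowed n {1, s} (walk n 2 a w)"
proof -
  have w: "\<And>i. i < 2 \<Longrightarrow> w i \<in> {1, s}" using assms(3) by (auto simp: less_2_cases_iff)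
  have wn: "\<And>i. i < 2 \<Longrightarrow> 0 < w i \<and> w i < n" using w assms(1,2) by fastforce
  show "regular (walk n 2 a w)" using wn by (rule regular_walk)
  have "\<And>t. t \<in> {1, s} \<Longrightarrow> t < n" using assms(1,2) by auto
  thus "allowed n {1, s} (walk n 2 a w)"
    using allowed_walk_iff[of n "{1, s}" 2 w a] w wn assms(1,2) by auto
qed

lemma gamma_at_walk:
  assumes "1 < s" "2 * s < n" "a < n" "b < n"
  shows "(gamma n s a (walk n 2 b (nth [1, s])) :: 'k::field) = (if a = b then 1 else 0)"
proof -
  have "(epath (walk n 2 a w) (walk n 2 b w') :: 'k) = (if a = b \<and> (\<forall>i<2. w i = w' i) then 1 else 0)"
    if "w = nth [1, s] \<or> w = nth [s, 1]" "w' = nth [1, s] \<or> w' = nth [s, 1]" for w w'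
    using assms that by (intro epath_walk) (auto simp: less_2_cases_iff)
  thus ?thesis using assms by (auto simp: gamma_eq_walks less_2_cases_iff)
qed

lemma gamma_in_Omega:
  assumes s: "1 < s" "2 * s < n" and a: "a < n"
  shows "(gamma n s a :: nat list \<Rightarrow> 'k::field) \<in> Omega n {1, s} 2"
proof -
  let ?w1 = "nth [1, s]" and ?w2 = "nth [s, 1]"
  have "(\<lambda>p. 1 * epath (walk n 2 a ?w1) p + (-1) * epath (walk n 2 a ?w2) p :: 'k)
      \<in> A_space n {1, s} 2"
    by (intro A_space_lincomb epath_in_A_space regular_walk_gamma allowed_walk_gamma) (use s in auto)
  hence A: "(gamma n s a :: nat list \<Rightarrow> 'k) \<in> A_space n {1, s} 2"
    by (simp add: gamma_eq_walks[OF a])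
  show ?thesis unfolding Omega_iff_face_sums[OF one_le_numeral A]
  proof (intro allI impI)
    fix q :: "nat list" and j :: nat
    assume q: "length q = 2" "0 < j" "j < 2"
    hence j: "j = 1" by simp
    have n: "walk n 2 a w ! 1 < n" for w using s by (simp add: nth_walk)
    \<comment> \<open>both paths of \<open>\<gamma>\<^sub>a\<close> have the same middle face \<open>(a, a + 1 + s)\<close>\<close>
    have "(\<Sum>x<n. (gamma n s a (insert_at j x q) :: 'k)) =
        (\<Sum>x<n. (epath (walk n 2 a ?w1) (insert_at 1 x q) :: 'k))
        - (\<Sum>x<n. epath (walk n 2 a ?w2) (insert_at 1 x q))"
      unfolding gamma_eq_walks[OF a] j by (simp add: sum_subtractf)
    also have "\<dots> = (if del_at 1 (walk n 2 a ?w1) = q then 1 else 0)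
        - (if del_at 1 (walk n 2 a ?w2) = q then 1 else 0)"
      using q n regular_walk_gamma[OF s] by (simp add: sum_epath_insert_at)
    also have "\<dots> = 0" by (simp add: walk_2 del_at_def add.commute)
    finally show "(\<Sum>x<n. (gamma n s a (insert_at j x q) :: 'k)) = 0" .
  qed
qed

lemma Omega_2_eq_zero_if_vanishes:
  fixes v :: "nat list \<Rightarrow> 'k::field"
  assumes s: "1 < s" "2 * s < n" "s \<noteq> 2" and v: "v \<in> Omega n {1, s} 2"
    and z: "\<And>a. a < n \<Longrightarrow> v (walk n 2 a (nth [1, s])) = 0"
  shows "v = 0"
proof
  fix p show "v p = 0 p"
  proof (rule ccontr)
    assume "v p \<noteq> 0 p"
    hence nz: "v p \<noteq> 0" by simp
    then obtain a w where a: "a < n" and w: "\<forall>i<2. w i \<in> {1, s}" and p: "p = walk n 2 a w"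
      using Omega_support_walk[OF s(1,2) v] by blast
    have i0: "Suc 0 < 2" by simp
    note nd = step_sum_notin[OF s(1,3) w i0]
    have "v (walk n 2 a w) = 0"
    proof (cases "w 0 = w 1")
      case True thus ?thesis using Omega_vanishes_at_equal_steps[OF s(1,2) v a w i0 nd] by simp
    next
      case False
      have "w 0 \<in> {1, s}" "w 1 \<in> {1, s}" using w by auto
      with False consider "w 0 = 1" "w 1 = s" | "w 0 = s" "w 1 = 1" by auto
      thus ?thesis
      proof cases
        case 1
        hence "walk n 2 a w = walk n 2 a (nth [1, s])" by (intro walk_cong) (auto simp: less_2_cases_iff)
        thus ?thesis using z a by simp
      next
        case 2
        hence "walk n 2 a (swap_steps 0 w) = walk n 2 a (nth [1, s])"
          by (intro walk_cong) (auto simp: less_2_cases_iff swap_steps_def)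
        thus ?thesis using Omega_swap_steps_antisym[OF s(1,2) v a w i0 nd] False z a by simp
      qed
    qed
    thus False using nz p by simp
  qed
qed

theorem is_basis_gamma:
  assumes s: "1 < s" "2 * s < n" "s \<noteq> 2"
  shows "is_basis (gamma n s ` {0..<n} :: (nat list \<Rightarrow> 'k::field) set) (Omega n {1, s} 2)
     \<and> card (gamma n s ` {0..<n} :: (nat list \<Rightarrow> 'k) set) = n"
proof -
  have "is_basis (gamma n s ` {0..<n} :: (nat list \<Rightarrow> 'k) set) (Omega n {1, s} 2)
     \<and> card (gamma n s ` {0..<n} :: (nat list \<Rightarrow> 'k) set) = card {0..<n}"
  proof (rule is_basis_of_dual_points[where pt = "\<lambda>a. walk n 2 a (nth [1, s])"])
    fix v :: "nat list \<Rightarrow> 'k"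
    assume "v \<in> Omega n {1, s} 2" "\<And>a. a \<in> {0..<n} \<Longrightarrow> v (walk n 2 a (nth [1, s])) = 0"
    thus "v = 0" by (intro Omega_2_eq_zero_if_vanishes[OF s]) auto
  qed (use gamma_at_walk[OF s(1,2), where 'k = 'k] gamma_in_Omega[OF s(1,2)] Omega_subspace
      in auto)
  thus ?thesis by simp
qed

section \<open>The case \<open>s = 2\<close>\<close>

definition two_at :: "nat \<Rightarrow> nat \<Rightarrow> nat" where
  "two_at k i = (if i = k then 2 else 1)"

lemma two_at_mem: "two_at k i \<in> {1, 2}"
  by (simp add: two_at_def)

lemma swap_steps_two_at: "swap_steps k (two_at k) = two_at (Suc k)"
  by (auto simp: swap_steps_def two_at_def fun_eq_iff)

lemma alpha_eq_epath_walk: "alpha n m a = epath (walk n m a (\<lambda>_. 1))"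
  unfolding alpha_def walk_def by simp

lemma beta_eq_sum_epath_walk:
  "beta n m a = (\<lambda>q. \<Sum>j=1..m. (-1)^(m-j) * epath (walk n m a (two_at (j-1))) q)"
proof -
  have sum_two_at: "(\<Sum>i<k. two_at l i) = (if k \<le> l then k else Suc k)" for k l
    by (induct k) (auto simp: two_at_def)
  have "map (\<lambda>i. (a + i) mod n) ([0..<j] @ [Suc j..<m+2]) = walk n m a (two_at (j-1))"
    if j: "1 \<le> j" "j \<le> m" for j
  proof (rule nth_equalityI)
    show "length (map (\<lambda>i. (a + i) mod n) ([0..<j] @ [Suc j..<m+2]))
        = length (walk n m a (two_at (j-1)))"
      using j by (simp del: upt_Suc)
    fix i assume "i < length (map (\<lambda>i. (a + i) mod n) ([0..<j] @ [Suc j..<m+2]))"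
    hence i: "i < Suc m" using j by (simp del: upt_Suc)
    have "length ([0..<j] @ [Suc j..<m+2]) = Suc m" using j by (simp del: upt_Suc)
    hence "map (\<lambda>i. (a + i) mod n) ([0..<j] @ [Suc j..<m+2]) ! i
        = (a + ([0..<j] @ [Suc j..<m+2]) ! i) mod n"
      using i by (intro nth_map) simp
    moreover have "([0..<j] @ [Suc j..<m+2]) ! i = (if i < j then i else Suc i)"
      using i j by (auto simp: nth_append simp del: upt_Suc)
    ultimately show "map (\<lambda>i. (a + i) mod n) ([0..<j] @ [Suc j..<m+2]) ! i
        = walk n m a (two_at (j-1)) ! i"
      using i j by (auto simp: nth_walk sum_two_at simp del: upt_Suc map_append)
  qed
  thus ?thesis unfolding beta_def by (intro ext sum.cong refl) auto
qed

lemma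
  assumes n: "5 \<le> n" and w: "\<And>i. w i \<in> {1, 2}"
  shows regular_walk_12: "regular (walk n m a w)"
    and epath_walk_12_in_A_space: "(epath (walk n m a w) :: nat list \<Rightarrow> 'k::field) \<in> A_space n {1, 2} m"
proof -
  have wn: "0 < w i \<and> w i < n" for i using w[of i] n by auto
  show r: "regular (walk n m a w)" using wn by (intro regular_walk)
  have "\<And>t. t \<in> {1, 2} \<Longrightarrow> t < n" using n by auto
  hence "allowed n {1, 2} (walk n m a w)" using allowed_walk_iff[of n "{1, 2}" m w a] n wn w by auto
  thus "(epath (walk n m a w) :: nat list \<Rightarrow> 'k) \<in> A_space n {1, 2} m"
    using r by (intro epath_in_A_space) auto
qed

lemma epath_walk_12:
  assumes "5 \<le> n" "a < n" "b < n" "\<And>i. w i \<in> {1, 2}" "\<And>i. w' i \<in> {1, 2}"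
  shows "(epath (walk n m a w) (walk n m b w') :: 'k::field)
    = (if a = b \<and> (\<forall>i<m. w i = w' i) then 1 else 0)"
proof (rule epath_walk)
  fix i show "0 < w i \<and> w i < n \<and> w' i < n" using assms(1) assms(4,5)[of i] by auto
qed (use assms in auto)

lemma face_sum_epath_walk_12:
  assumes n: "5 \<le> n" and w: "\<And>i. w i \<in> {1, 2}" and q: "length q = m" and i: "Suc i < m"
    and na: "\<not> arrow n {1, 2} (q ! i) (q ! Suc i)"
  shows "(\<Sum>x<n. (epath (walk n m a w) (insert_at (Suc i) x q) :: 'k::field))
    = (if del_at (Suc i) (walk n m a w) = q then 1 else 0)"
    and "w i = 1 \<Longrightarrow> w (Suc i) = 1 \<Longrightarrow> del_at (Suc i) (walk n m a w) \<noteq> q"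
proof -
  have wn: "0 < w k \<and> w k < n" for k using w[of k] n by auto
  have d: "w i + w (Suc i) < n" using w[of i] w[of "Suc i"] n by auto
  show "(\<Sum>x<n. (epath (walk n m a w) (insert_at (Suc i) x q) :: 'k))
    = (if del_at (Suc i) (walk n m a w) = q then 1 else 0)"
    using n i q by (intro sum_epath_insert_at regular_walk_12 w) (auto simp: nth_walk)
  assume "w i = 1" "w (Suc i) = 1"
  moreover have "\<And>t. t \<in> {1, 2} \<Longrightarrow> t < n" using n by auto
  ultimately show "del_at (Suc i) (walk n m a w) \<noteq> q"
    using arrow_face_of_walk_iff[OF i wn d, of "{1, 2}" a] na by auto
qed

lemma alpha_in_Omega:
  assumes n: "5 \<le> n" and m: "1 \<le> m"
  shows "(alpha n m a :: nat list \<Rightarrow> 'k::field) \<in> Omega n {1, 2} m"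
proof -
  have A: "(epath (walk n m a (\<lambda>_. 1)) :: nat list \<Rightarrow> 'k) \<in> A_space n {1, 2} m"
    using n by (intro epath_walk_12_in_A_space) auto
  show ?thesis unfolding alpha_eq_epath_walk Omega_iff_face_sums[OF m A]
  proof (intro allI impI)
    fix q :: "nat list" and j
    assume q: "length q = m" "0 < j" "j < m" "\<not> arrow n {1, 2} (q ! (j - 1)) (q ! j)"
    then obtain i where i: "j = Suc i" by (cases j) auto
    show "(\<Sum>x<n. (epath (walk n m a (\<lambda>_. 1)) (insert_at j x q) :: 'k)) = 0"
      using face_sum_epath_walk_12[OF n _ q(1), where i = i and w = "\<lambda>_. 1" and a = a] q i by simp
  qed
qed

lemma beta_in_Omega:
  assumes n: "5 \<le> n" and m: "1 \<le> m"
  shows "(beta n m a :: nat list \<Rightarrow> 'k::field) \<in> Omega n {1, 2} m"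
proof -
  define B where "B k = walk n m a (two_at (k - 1))" for k
  define c where "c k = ((-1)^(m-k) :: 'k)" for k
  have beta: "(beta n m a :: nat list \<Rightarrow> 'k) = (\<lambda>q. \<Sum>k\<in>{1..m}. c k * epath (B k) q)"
    by (simp add: beta_eq_sum_epath_walk B_def c_def)
  have A: "(beta n m a :: nat list \<Rightarrow> 'k) \<in> A_space n {1, 2} m"
    unfolding beta B_def by (intro A_space_sum epath_walk_12_in_A_space[OF n]) (auto simp: two_at_def)
  show ?thesis unfolding Omega_iff_face_sums[OF m A]
  proof (intro allI impI)
    fix q :: "nat list" and j
    assume q: "length q = m" "0 < j" "j < m" "\<not> arrow n {1, 2} (q ! (j - 1)) (q ! j)"
    then obtain i where i: "j = Suc i" by (cases j) auto
    define D where "D k = (if del_at j (B k) = q then 1 else (0::'k))" for k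
    have face: "(\<Sum>x<n. (epath (B k) (insert_at j x q) :: 'k)) = D k"
      and face_11: "k - 1 \<noteq> i \<Longrightarrow> k - 1 \<noteq> Suc i \<Longrightarrow> D k = 0" for k
      using face_sum_epath_walk_12[OF n, where w = "two_at (k - 1)", OF two_at_mem q(1),
          where i = i and a = a] q i
      by (simp_all add: B_def D_def two_at_def)
    have "(\<Sum>x<n. beta n m a (insert_at j x q)) = (\<Sum>k\<in>{1..m}. c k * D k)"
      unfolding beta by (subst sum.swap) (simp add: sum_distrib_left[symmetric] face)
    also have "\<dots> = (\<Sum>k\<in>{j, Suc j}. c k * D k)"
    proof (rule sum.mono_neutral_right)
      show "\<forall>k\<in>{1..m} - {j, Suc j}. c k * D k = 0"
        using face_11 i by force
    qed (use q in auto)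
    \<comment> \<open>the walks \<open>B j\<close> and \<open>B (j + 1)\<close> differ by a swap at the deleted vertex\<close>
    also have "\<dots> = (c j + c (Suc j)) * D j"
    proof -
      have "del_at j (B j) = del_at j (B (Suc j))"
        using del_at_walk_swap_steps[of i m n a "two_at i"] q i
        by (simp add: B_def swap_steps_two_at)
      thus ?thesis by (simp add: D_def algebra_simps)
    qed
    also have "c j + c (Suc j) = 0"
    proof -
      have "m - j = Suc (m - Suc j)" using q by simp
      thus ?thesis by (simp add: c_def)
    qed
    finally show "(\<Sum>x<n. (beta n m a (insert_at j x q) :: 'k)) = 0" by simp
  qed
qed

lemma Omega_12_at_single_two:
  fixes u :: "nat list \<Rightarrow> 'k::field"
  assumes n: "5 \<le> n" and u: "u \<in> Omega n {1, 2} m" and a: "a < n"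
  shows "k < m \<Longrightarrow> u (walk n m a (two_at k)) = (-1)^k * u (walk n m a (two_at 0))"
proof (induct k)
  case (Suc k)
  have w: "\<forall>l<m. two_at k l \<in> {1, 2}" by (simp add: two_at_def)
  have "two_at k k + two_at k (Suc k) \<notin> {1, 2}" "two_at k k \<noteq> two_at k (Suc k)"
    by (simp_all add: two_at_def)
  from Omega_swap_steps_antisym[OF _ _ u a w Suc.prems this] n
  have "u (walk n m a (two_at (Suc k))) = - u (walk n m a (two_at k))"
    by (simp add: swap_steps_two_at)
  thus ?case using Suc by simp
qed simp

lemma Omega_12_vanishes_at_two_twos:
  fixes u :: "nat list \<Rightarrow> 'k::field"
  assumes n: "5 \<le> n" and u: "u \<in> Omega n {1, 2} m" and a: "a < n"
  shows "\<forall>l<m. w l \<in> {1, 2} \<Longrightarrow> w i = 2 \<Longrightarrow> w (i + Suc d) = 2 \<Longrightarrow> i + Suc d < m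
    \<Longrightarrow> u (walk n m a w) = 0"
proof (induct d arbitrary: w)
  case 0
  thus ?case using Omega_vanishes_at_equal_steps[OF _ _ u a, where i = i] n by simp
next
  case (Suc d)
  define k where "k = i + Suc d"
  have k: "Suc k < m" "w (Suc k) = 2" using Suc.prems by (auto simp: k_def)
  show ?case
  proof (cases "w k = 2")
    case True thus ?thesis using Suc k unfolding k_def by auto
  next
    case False
    \<comment> \<open>move the second 2 one step to the left\<close>
    hence wk: "w k = 1" using Suc.prems(1) k(1) by (metis Suc_lessD insertE singletonD)
    have sw: "\<forall>l<m. swap_steps k w l \<in> {1, 2}" using swap_steps_mem[OF Suc.prems(1) k(1)] .
    have "swap_steps k w i = 2" "swap_steps k w (i + Suc d) = 2"
      using Suc.prems(2) k by (auto simp: swap_steps_def k_def)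
    hence "u (walk n m a (swap_steps k w)) = 0" using Suc.hyps[OF sw] k by (simp add: k_def)
    thus ?thesis
      using Omega_swap_steps_antisym[OF _ _ u a Suc.prems(1) k(1)] wk k n by simp
  qed
qed

lemma Omega_12_eq_zero_if_vanishes:
  fixes v :: "nat list \<Rightarrow> 'k::field"
  assumes n: "5 \<le> n" and v: "v \<in> Omega n {1, 2} m"
    and z1: "\<And>a. a < n \<Longrightarrow> v (walk n m a (\<lambda>_. 1)) = 0"
    and z2: "\<And>a. a < n \<Longrightarrow> v (walk n m a (two_at 0)) = 0"
  shows "v = 0"
proof
  fix p show "v p = 0 p"
  proof (rule ccontr)
    assume "v p \<noteq> 0 p"
    hence nz: "v p \<noteq> 0" by simp
    then obtain a w where a: "a < n" and w: "\<forall>i<m. w i \<in> {1, 2}" and p: "p = walk n m a w"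
      using Omega_support_walk[of 2 n v m p] n v by auto
    have "v (walk n m a w) = 0"
    proof (cases "\<exists>k<m. w k = 2")
      case False
      hence "walk n m a w = walk n m a (\<lambda>_. 1)" using w by (intro walk_cong) auto
      thus ?thesis using z1 a by simp
    next
      case True
      then obtain k where k: "k < m" "w k = 2" by auto
      show ?thesis
      proof (cases "\<exists>k'<m. k' \<noteq> k \<and> w k' = 2")
        case True
        then obtain k' where k': "k' < m" "k' \<noteq> k" "w k' = 2" by auto
        have "w (min k k') = 2" "w (min k k' + Suc (max k k' - min k k' - 1)) = 2"
          "min k k' + Suc (max k k' - min k k' - 1) < m"
          using k k' by (auto simp: min_def max_def)
        thus ?thesis using Omega_12_vanishes_at_two_twos[OF n v a w] by blast
      next
        case False
        hence "walk n m a w = walk n m a (two_at k)"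
          using w k by (intro walk_cong) (auto simp: two_at_def)
        thus ?thesis using Omega_12_at_single_two[OF n v a k(1)] z2 a by simp
      qed
    qed
    thus False using nz p by simp
  qed
qed

lemma alpha_beta_at_walks:
  assumes n: "5 \<le> n" and m: "1 \<le> m" and ab: "a < n" "b < n"
  shows "(alpha n m a (walk n m b (\<lambda>_. 1)) :: 'k::field) = (if a = b then 1 else 0)"
    and "(alpha n m a (walk n m b (two_at 0)) :: 'k) = 0"
    and "(beta n m a (walk n m b (\<lambda>_. 1)) :: 'k) = 0"
    and "(beta n m a (walk n m b (two_at 0)) :: 'k) = (if a = b then (-1)^(m-1) else 0)"
proof -
  have ones: "(\<lambda>_. 1::nat) i \<in> {1, 2}" for i by simp
  note ep = epath_walk_12[OF n ab, where 'k = 'k]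
  have two_at_eq_iff: "(\<forall>i<m. two_at k i = two_at l i) \<longleftrightarrow> k = l" if "k < m" "l < m" for k l
    using that by (auto simp: two_at_def)
  show "(alpha n m a (walk n m b (\<lambda>_. 1)) :: 'k) = (if a = b then 1 else 0)"
    unfolding alpha_eq_epath_walk ep[OF ones ones] by simp
  show "(alpha n m a (walk n m b (two_at 0)) :: 'k) = 0"
    unfolding alpha_eq_epath_walk ep[OF ones two_at_mem] using m by (auto simp: two_at_def)
  show "(beta n m a (walk n m b (\<lambda>_. 1)) :: 'k) = 0"
    unfolding beta_eq_sum_epath_walk
  proof (rule sum.neutral, rule ballI)
    fix k assume "k \<in> {1..m}"
    hence "\<not> (\<forall>i<m. two_at (k - 1) i = 1)" by (auto simp: two_at_def intro!: exI[of _ "k - 1"])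
    thus "(-1)^(m-k) * (epath (walk n m a (two_at (k - 1))) (walk n m b (\<lambda>_. 1)) :: 'k) = 0"
      unfolding ep[OF two_at_mem ones] by simp
  qed
  have "(beta n m a (walk n m b (two_at 0)) :: 'k)
      = (\<Sum>k=1..m. if k = 1 then (if a = b then (-1)^(m-1) else 0) else 0)"
    unfolding beta_eq_sum_epath_walk
    by (rule sum.cong) (auto simp: ep[OF two_at_mem two_at_mem] two_at_eq_iff)
  thus "(beta n m a (walk n m b (two_at 0)) :: 'k) = (if a = b then (-1)^(m-1) else 0)"
    using m by simp
qed

theorem is_basis_alpha_beta:
  assumes n: "5 \<le> n" and m: "1 \<le> m"
  shows "is_basis ((alpha n m ` {0..<n}) \<union> (beta n m ` {0..<n}) :: (nat list \<Rightarrow> 'k::field) set)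
            (Omega n {1, 2} m)
     \<and> card ((alpha n m ` {0..<n}) \<union> (beta n m ` {0..<n}) :: (nat list \<Rightarrow> 'k) set) = 2 * n"
proof -
  let ?I = "{0..<n} <+> {0..<n}"
  define f :: "nat + nat \<Rightarrow> nat list \<Rightarrow> 'k" where "f = case_sum (alpha n m) (beta n m)"
  define pt where "pt = case_sum (\<lambda>a. walk n m a (\<lambda>_. 1)) (\<lambda>a. walk n m a (two_at 0))"
  note at_walks = alpha_beta_at_walks[OF n m, where 'k = 'k]
  have "f ` ?I = (alpha n m ` {0..<n}) \<union> (beta n m ` {0..<n})"
    by (auto simp: f_def Plus_def image_Un image_image)
  moreover have "card ?I = 2 * n" by (simp add: card_Plus)
  moreover have "is_basis (f ` ?I) (Omega n {1, 2} m) \<and> card (f ` ?I) = card ?I"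
  proof (rule is_basis_of_dual_points[where pt = pt])
    fix v :: "nat list \<Rightarrow> 'k" assume v: "v \<in> Omega n {1, 2} m" "\<And>i. i \<in> ?I \<Longrightarrow> v (pt i) = 0"
    show "v = 0"
    proof (rule Omega_12_eq_zero_if_vanishes[OF n v(1)])
      fix a assume "a < n"
      hence "Inl a \<in> ?I" "Inr a \<in> ?I" by auto
      thus "v (walk n m a (\<lambda>_. 1)) = 0" "v (walk n m a (two_at 0)) = 0"
        using v(2)[of "Inl a"] v(2)[of "Inr a"] by (simp_all add: pt_def)
    qed
  qed (use at_walks alpha_in_Omega[OF n m] beta_in_Omega[OF n m] Omega_subspace
       in \<open>auto simp: f_def pt_def split: if_splits\<close>)
  ultimately show ?thesis by simp
qed

theorem mainTheorem7:
  fixes n s :: nat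
  assumes "n \<ge> 5" and "1 < s" and "2 * s < n"
  shows "(s = 2 \<longrightarrow> (\<forall>m\<ge>1.
            card ((alpha n m ` {0..<n}) \<union> (beta n m ` {0..<n}) :: (nat list \<Rightarrow> 'k::field_char_0) set) = 2 * n
          \<and> is_basis ((alpha n m ` {0..<n}) \<union> (beta n m ` {0..<n}) :: (nat list \<Rightarrow> 'k) set)
                     (Omega n {1, s} m)))
       \<and> (s \<noteq> 2 \<longrightarrow>
            card (gamma n s ` {0..<n} :: (nat list \<Rightarrow> 'k) set) = n
          \<and> is_basis (gamma n s ` {0..<n} :: (nat list \<Rightarrow> 'k) set) (Omega n {1, s} 2)
          \<and> (\<forall>m\<ge>3. Omega n {1, s} m = ({\<lambda>_. 0} :: (nat list \<Rightarrow> 'k) set)))"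
proof (intro conjI impI allI)
  fix m :: nat assume "s = 2" "m \<ge> 1"
  thus "card ((alpha n m ` {0..<n}) \<union> (beta n m ` {0..<n}) :: (nat list \<Rightarrow> 'k) set) = 2 * n"
    and "is_basis ((alpha n m ` {0..<n}) \<union> (beta n m ` {0..<n}) :: (nat list \<Rightarrow> 'k) set)
           (Omega n {1, s} m)"
    using is_basis_alpha_beta[OF assms(1)] by auto
next
  assume s: "s \<noteq> 2"
  thus "card (gamma n s ` {0..<n} :: (nat list \<Rightarrow> 'k) set) = n"
    and "is_basis (gamma n s ` {0..<n} :: (nat list \<Rightarrow> 'k) set) (Omega n {1, s} 2)"
    using is_basis_gamma[OF assms(2,3)] by auto
  fix m :: nat assume "m \<ge> 3"
  moreover have "(\<lambda>_. 0) \<in> (Omega n {1, s} m :: (nat list \<Rightarrow> 'k) set)"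
    using module.subspace_0[OF module_cscale Omega_subspace] by (simp add: zero_fun_def)
  ultimately show "Omega n {1, s} m = ({\<lambda>_. 0} :: (nat list \<Rightarrow> 'k) set)"
    using Omega_eq_zero_if_ge_3[OF assms(2,3) s] by blast
qed

end
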